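(* Let $k\ge 0$ be an integer and define the sequence $(G_n)_{n\ge 0}$ by $G_0=k$, $G_1=1$, and $G_n=G_{n-1}+G_{n-2}$ for $n\ge 2$. Then for every integer $m\ge 0$, $$[\underbrace{4,4,\dots,4}_{m},\,2k+3]=\frac{G_{3m+4}}{G_{3m+1}},$$ where the continued fraction has $m+1$ entries $a_0,\dots,a_m$ with $a_i=4$ for $0\le i<m$ and $a_m=2k+3$.
   Context: For numbers $a_0,a_1,\dots,a_m$, the finite simple continued fraction $[a_0,a_1,\dots,a_m]$ denotes $a_0+\cfrac{1}{a_1+\cfrac{1}{\ddots+\cfrac{1}{a_m}}}$, evaluated as a rational number; $[a_0]=a_0$. *)

theory Defs
  imports Complex_Main
begin

fun cf :: "rat list \<Rightarrow> rat" where
  "cf [] = 0"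
| "cf [a] = a"
| "cf (a # b # rest) = a + 1 / cf (b # rest)"

fun G :: "int \<Rightarrow> nat \<Rightarrow> int" where
  "G k 0 = k"
| "G k (Suc 0) = 1"
| "G k (Suc (Suc n)) = G k (Suc n) + G k n"

end

theory Submission
  imports Defs
begin

text \<open>Three steps of the recurrence give \<open>G (n + 6) = 4 G (n + 3) + G n\<close>, so the ratios
  \<open>G (3m + 4) / G (3m + 1)\<close> obey \<open>r (m + 1) = 4 + 1 / r m\<close>, which is exactly how prepending
  a partial quotient 4 acts on a continued fraction; the start value is
  \<open>G 4 / G 1 = 2k + 3\<close>. Positivity of \<open>G\<close> for \<open>k \<ge> 0\<close> keeps all denominators nonzero.\<close>

lemma cf_Cons: "xs \<noteq> [] \<Longrightarrow> cf (a # xs) = a + 1 / cf xs"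
  by (cases xs) auto

lemma G_add6: "G k (n + 6) = 4 * G k (n + 3) + G k n"
  by (simp add: numeral_eq_Suc)

lemma G_Suc_pos: "k \<ge> 0 \<Longrightarrow> G k (Suc n) > 0"
proof -
  assume "k \<ge> 0"
  then have "G k n \<ge> 0 \<and> G k (Suc n) > 0"
    by (induction n) auto
  then show ?thesis ..
qed

lemma G_ratio_add3:
  assumes "k \<ge> 0"
  shows "4 + 1 / (of_int (G k (n + 4)) / of_int (G k (n + 1)))
           = (of_int (G k (n + 7)) / of_int (G k (n + 4)) :: 'a :: field_char_0)"
proof -
  have "G k (n + 4) > 0"
    using G_Suc_pos[OF assms, of "n + 3"] by (simp add: add.commute)
  moreover have "G k (n + 7) = 4 * G k (n + 4) + G k (n + 1)"
    using G_add6[of k "n + 1"] by (simp add: add.commute)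
  ultimately show ?thesis
    by (simp add: field_simps)
qed

theorem theorem1:
  fixes k :: int and m :: nat
  assumes "k \<ge> 0"
  shows "cf (replicate m 4 @ [of_int (2 * k + 3)])
           = of_int (G k (3 * m + 4)) / of_int (G k (3 * m + 1))"
proof (induction m)
  case 0
  then show ?case by (simp add: numeral_eq_Suc)
next
  case (Suc m)
  have "cf (replicate (Suc m) 4 @ [of_int (2 * k + 3)])
          = 4 + 1 / (of_int (G k (3 * m + 4)) / of_int (G k (3 * m + 1)))"
    using Suc by (simp add: cf_Cons)
  also have "\<dots> = of_int (G k (3 * m + 7)) / of_int (G k (3 * m + 4))"
    using G_ratio_add3[OF assms] .
  finally show ?case by (simp add: add.commute)
qed

end
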